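(* Let $z_1(x)=2e^{1-\frac{1}{1-(x/\pi)^2}}-1$ on $[-\pi,\pi]$ (with $z_1$ and all its derivatives extended continuously to $x=\pm\pi$), and let $\epsilon=\frac1{128}$. Then for each $k\in\{0,1,2,3,4,5\}$: for every $x\in[-\pi,-\pi+\epsilon]$, $\partial_x^k z_1(x)$ lies between $\partial_x^k z_1(-\pi)$ and $\partial_x^k z_1(-\pi+\epsilon)$ (in their convex hull), and for every $x\in[\pi-\epsilon,\pi]$, $\partial_x^k z_1(x)$ lies between $\partial_x^k z_1(\pi-\epsilon)$ and $\partial_x^k z_1(\pi)$. *)

theory Defs
  imports "HOL-Analysis.Analysis"
begin

text \<open>The function z1 on [-pi,pi]; at the endpoints (and outside) it is given its
continuous (indeed smooth) extension, the constant -1, so that the k-th derivative at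
x = +-pi is the continuous extension of the k-th derivative from the interior.\<close>
definition z1 :: "real \<Rightarrow> real" where
  "z1 x = (if \<bar>x\<bar> < pi then 2 * exp (1 - 1 / (1 - (x / pi)\<^sup>2)) - 1 else -1)"

definition eps :: real where
  "eps = 1 / 128"

definition between :: "real \<Rightarrow> real \<Rightarrow> real \<Rightarrow> bool" where
  "between a b v \<longleftrightarrow> min a b \<le> v \<and> v \<le> max a b"

end

(*
  On (-pi, pi) every derivative of z1 has the form
    exp (1 - 1/rho) * (x/pi)^a * P (rho) / (rho^(2k) * pi^k),   rho = 1 - (x/pi)^2,
  with a the parity of k and P a polynomial given by an explicit recursion; since exp (-1/rho)
  decays faster than any power of rho, these expressions extend by 0 to a smooth function on all
  of R. Within eps of an endpoint 0 < rho <= 2 eps / pi <= 1/192, and there the polynomials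
  P_1, ..., P_6 keep the sign of their constant term (-1)^j 2^(j+1). So each derivative of order
  1 to 6 has constant sign near either endpoint, and the derivatives of order at most 5 are
  monotone there, hence lie between their values at the ends of the interval.
*)
theory Submission
  imports Defs "HOL-Computational_Algebra.Polynomial"
begin

abbreviation rho :: "real \<Rightarrow> real" where
  "rho x \<equiv> 1 - (x / pi)\<^sup>2"

definition bump_term :: "nat \<Rightarrow> nat \<Rightarrow> real poly \<Rightarrow> real \<Rightarrow> real" where
  "bump_term a k p x =
     (if \<bar>x\<bar> < pi
      then exp (1 - 1 / rho x) * (x / pi) ^ a * poly p (rho x) / (rho x ^ (2 * k) * pi ^ k)
      else 0)"

(* Differentiating bump_term a k p gives bump_term (1 - a) (Suc k) (bump_next a k p): bump_step
   collects the terms carrying (x/pi)^(a+1), and for a = 1 the factor (x/pi)^2 = 1 - rho is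
   absorbed into the polynomial. *)
definition bump_step :: "nat \<Rightarrow> real poly \<Rightarrow> real poly" where
  "bump_step k p = smult (-2) ([:0, 0, 1:] * pderiv p) + [:-2, 4 * of_nat k:] * p"

definition bump_next :: "nat \<Rightarrow> nat \<Rightarrow> real poly \<Rightarrow> real poly" where
  "bump_next a k p =
     (if a = 0 then bump_step k p else [:0, 0, 1:] * p + [:1, -1:] * bump_step k p)"

fun bump_poly :: "nat \<Rightarrow> real poly" where
  "bump_poly 0 = [:2:]"
| "bump_poly (Suc k) = bump_next (k mod 2) k (bump_poly k)"

lemma abs_poly_le_map_poly_abs:
  fixes p :: "real poly"
  assumes "\<bar>r\<bar> \<le> d"
  shows "\<bar>poly p r\<bar> \<le> poly (map_poly abs p) d"
proof (induction p)
  case (pCons c q)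
  have "\<bar>poly (pCons c q) r\<bar> \<le> \<bar>c\<bar> + \<bar>r\<bar> * \<bar>poly q r\<bar>"
    using abs_triangle_ineq [of c "r * poly q r"] by (simp add: abs_mult)
  also have "\<dots> \<le> \<bar>c\<bar> + d * poly (map_poly abs q) d"
    using assms pCons.IH by (intro add_left_mono mult_mono) auto
  finally show ?case by (simp add: map_poly_pCons)
qed simp

lemma poly_pCons_pos_near_zero:
  fixes q :: "real poly"
  assumes "0 \<le> r" "r \<le> d" "d * poly (map_poly abs q) d < c"
  shows "0 < poly (pCons c q) r"
proof -
  have "\<bar>r * poly q r\<bar> \<le> d * poly (map_poly abs q) d"
    unfolding abs_mult using assms abs_poly_le_map_poly_abs [of r d q] by (intro mult_mono) auto
  then show ?thesis
    using assms(3) by (simp add: abs_le_iff)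
qed

lemma exp_ge_power_div_fact:
  fixes t :: real
  assumes "0 \<le> t"
  shows "t ^ m / fact m \<le> exp t"
proof -
  have "(\<Sum>n\<in>{m}. inverse (fact n) * t ^ n) \<le> (\<Sum>n. inverse (fact n) * t ^ n)"
    by (rule sum_le_suminf [OF summable_exp]) (use assms in auto)
  then show ?thesis by (simp add: exp_def field_simps)
qed

lemma exp_one_minus_inverse_le_power:
  fixes r :: real
  assumes "0 < r"
  shows "exp (1 - 1 / r) \<le> exp 1 * fact m * r ^ m"
proof -
  have "1 / (r ^ m * fact m) \<le> exp (1 / r)"
    using exp_ge_power_div_fact [of "1 / r" m] assms by (simp add: power_one_over)
  then have "exp 1 / exp (1 / r) \<le> exp 1 / (1 / (r ^ m * fact m))"
    using assms by (intro divide_left_mono) auto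
  then show ?thesis by (simp add: exp_diff mult_ac)
qed

lemma quadratic_bound_imp_DERIV_zero:
  fixes f :: "real \<Rightarrow> real"
  assumes "\<And>y. \<bar>f y - f x\<bar> \<le> C * (y - x)\<^sup>2"
  shows "(f has_real_derivative 0) (at x)"
  unfolding DERIV_def
proof (rule Lim_null_comparison)
  have "0 \<le> C" using assms [of "x + 1"] by simp
  have "norm ((f (x + h) - f x) / h) \<le> C * \<bar>h\<bar>" for h
  proof (cases "h = 0")
    case False
    have "\<bar>f (x + h) - f x\<bar> / \<bar>h\<bar> \<le> C * h\<^sup>2 / \<bar>h\<bar>"
      using assms [of "x + h"] by (simp add: divide_right_mono)
    also have "\<dots> = C * \<bar>h\<bar>"
      using False by (subst power2_abs [symmetric]) (simp add: power2_eq_square field_simps del: abs_mult_self_eq)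
    finally show ?thesis by (simp add: abs_div)
  qed (use \<open>0 \<le> C\<close> in simp)
  then show "\<forall>\<^sub>F h in at 0. norm ((f (x + h) - f x) / h) \<le> C * \<bar>h\<bar>"
    by (intro always_eventually allI)
  show "((\<lambda>h. C * \<bar>h\<bar>) \<longlongrightarrow> 0) (at 0)"
    by (intro tendsto_mult_right_zero tendsto_rabs_zero tendsto_ident_at)
qed

lemma rho_pos:
  assumes "\<bar>x\<bar> < pi"
  shows "0 < rho x"
proof -
  have "\<bar>x / pi\<bar> < 1" using assms by simp
  then show ?thesis by (simp add: abs_square_less_1)
qed

lemma rho_le_endpoint_dist:
  assumes "\<bar>x\<bar> \<le> pi" "\<bar>c\<bar> = pi"
  shows "rho x \<le> 2 * \<bar>x - c\<bar> / pi"
proof -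
  have "rho x = (pi - x) * (pi + x) / pi\<^sup>2"
    by (simp add: field_simps power2_eq_square)
  also have "\<dots> \<le> \<bar>x - c\<bar> * (2 * pi) / pi\<^sup>2"
  proof (intro divide_right_mono)
    consider "c = pi" | "c = - pi" using assms(2) by linarith
    then show "(pi - x) * (pi + x) \<le> \<bar>x - c\<bar> * (2 * pi)"
    proof cases
      case 1
      then show ?thesis using assms(1) by (simp add: mult_left_mono)
    next
      case 2
      have "(pi - x) * (pi + x) \<le> (2 * pi) * (pi + x)"
        using assms(1) by (intro mult_right_mono) auto
      then show ?thesis using 2 assms(1) by (simp add: ac_simps)
    qed
  qed simp
  also have "\<dots> = 2 * \<bar>x - c\<bar> / pi"
    by (simp add: power2_eq_square)
  finally show ?thesis .
qed

lemma abs_bump_term_le: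
  "\<bar>bump_term a k p y\<bar> \<le> exp 1 * fact (2 * k + 2) * poly (map_poly abs p) 1 * (rho y)\<^sup>2"
proof (cases "\<bar>y\<bar> < pi")
  case True
  define r where "r = rho y"
  have r: "0 < r" "r \<le> 1" using rho_pos [OF True] by (auto simp: r_def)
  have "\<bar>bump_term a k p y\<bar> = exp (1 - 1 / r) * \<bar>y / pi\<bar> ^ a * \<bar>poly p r\<bar> / (r ^ (2 * k) * pi ^ k)"
    using True r by (simp add: bump_term_def r_def abs_mult power_abs)
  also have "\<dots> \<le> exp 1 * fact (2 * k + 2) * r ^ (2 * k + 2) * 1 * poly (map_poly abs p) 1 / (r ^ (2 * k) * 1)"
    using True r pi_gt3 exp_one_minus_inverse_le_power [OF r(1), of "2 * k + 2"]
      abs_poly_le_map_poly_abs [of r 1 p]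
    by (intro divide_mono mult_mono) (auto simp: power_le_one one_le_power)
  also have "\<dots> = exp 1 * fact (2 * k + 2) * poly (map_poly abs p) 1 * r\<^sup>2"
    using r by (simp add: power_add power2_eq_square field_simps)
  finally show ?thesis by (simp add: r_def)
next
  case False
  have "0 \<le> poly (map_poly abs p) 1"
    using abs_poly_le_map_poly_abs [of 0 1 p] by simp
  then show ?thesis using False by (simp add: bump_term_def)
qed

(* Near an endpoint c, rho is O(|x - c|), so abs_bump_term_le makes a bump term O((x - c)^2). *)
lemma DERIV_bump_term_endpoint:
  assumes "\<bar>c\<bar> = pi"
  shows "(bump_term a k p has_real_derivative 0) (at c)"
proof (rule quadratic_bound_imp_DERIV_zero)
  fix y
  define C where "C = exp 1 * fact (2 * k + 2) * poly (map_poly abs p) 1"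
  have "0 \<le> C"
    using abs_poly_le_map_poly_abs [of 0 1 p] by (simp add: C_def)
  have rho_sq: "(rho y)\<^sup>2 \<le> 4 * (y - c)\<^sup>2" if "\<bar>y\<bar> < pi"
  proof -
    have "rho y \<le> 2 * \<bar>y - c\<bar> / pi" using rho_le_endpoint_dist [of y c] that assms by simp
    also have "\<dots> \<le> 2 * \<bar>y - c\<bar> / 1" using pi_gt3 by (intro divide_left_mono) auto
    finally have "(rho y)\<^sup>2 \<le> (2 * \<bar>y - c\<bar>)\<^sup>2"
      using rho_pos [OF that] by (intro power_mono) auto
    then show ?thesis by (simp add: power_mult_distrib)
  qed
  have "\<bar>bump_term a k p y\<bar> \<le> 4 * C * (y - c)\<^sup>2"
  proof (cases "\<bar>y\<bar> < pi")
    case True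
    have "\<bar>bump_term a k p y\<bar> \<le> C * (rho y)\<^sup>2"
      using abs_bump_term_le by (simp add: C_def)
    also have "\<dots> \<le> C * (4 * (y - c)\<^sup>2)"
      using rho_sq [OF True] \<open>0 \<le> C\<close> by (rule mult_left_mono)
    finally show ?thesis by simp
  qed (use \<open>0 \<le> C\<close> in \<open>simp add: bump_term_def\<close>)
  then show "\<bar>bump_term a k p y - bump_term a k p c\<bar> \<le> 4 * C * (y - c)\<^sup>2"
    using assms by (simp add: bump_term_def)
qed

lemma DERIV_bump_term_interior:
  assumes "\<bar>x\<bar> < pi"
  shows "((\<lambda>x. exp (1 - 1 / rho x) * (x / pi) ^ a * poly p (rho x) / (rho x ^ (2 * k) * pi ^ k))
      has_real_derivative
        exp (1 - 1 / rho x) * ((x / pi) ^ Suc a * poly (bump_step k p) (rho x)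
          + a * (x / pi) ^ (a - 1) * (rho x)\<^sup>2 * poly p (rho x)) / (rho x ^ (2 * Suc k) * pi ^ Suc k))
      (at x)"
proof -
  have r: "rho x \<noteq> 0" "(x / pi)\<^sup>2 \<noteq> 1" using rho_pos [OF assms] by auto
  define E where "E = exp (1 - 1 / rho x)"
  define A where "A = poly p (rho x)"
  define B where "B = poly (pderiv p) (rho x)"
  define U where "U = (x / pi) ^ a"
  define V where "V = (x / pi) ^ (a - Suc 0)"
  define R where "R = rho x"
  have "R \<noteq> 0" using r by (simp add: R_def)
  (* abstracting the transcendental subterms leaves a rational identity for field_simps *)
  show ?thesis
    apply (rule derivative_eq_intros refl poly_DERIV [THEN DERIV_chain2] | simp add: r)+
    apply (simp add: bump_step_def)
    apply (simp only: E_def [symmetric] A_def [symmetric] B_def [symmetric] U_def [symmetric]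
        V_def [symmetric] R_def [symmetric])
    apply (cases k)
     apply (simp_all add: field_simps power2_eq_square \<open>R \<noteq> 0\<close>)
    done
qed

lemma DERIV_bump_term:
  assumes "a \<le> 1"
  shows "(bump_term a k p has_real_derivative bump_term (1 - a) (Suc k) (bump_next a k p) x) (at x)"
proof -
  consider "\<bar>x\<bar> < pi" | "\<bar>x\<bar> = pi" | "pi < \<bar>x\<bar>" by linarith
  then show ?thesis
  proof cases
    case 1
    have step: "u ^ Suc a * poly (bump_step k p) (1 - u\<^sup>2) + a * u ^ (a - 1) * (1 - u\<^sup>2)\<^sup>2 * poly p (1 - u\<^sup>2)
        = u ^ (1 - a) * poly (bump_next a k p) (1 - u\<^sup>2)" for u :: real
      using assms by (cases a) (auto simp: bump_next_def algebra_simps power2_eq_square)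
    have "bump_term (1 - a) (Suc k) (bump_next a k p) x
        = exp (1 - 1 / rho x) * ((x / pi) ^ (1 - a) * poly (bump_next a k p) (rho x))
          / (rho x ^ (2 * Suc k) * pi ^ Suc k)"
      using 1 by (simp add: bump_term_def mult.assoc)
    then have "((\<lambda>x. exp (1 - 1 / rho x) * (x / pi) ^ a * poly p (rho x) / (rho x ^ (2 * k) * pi ^ k))
        has_real_derivative bump_term (1 - a) (Suc k) (bump_next a k p) x) (at x)"
      using DERIV_bump_term_interior [OF 1, of a p k] unfolding step by simp
    then show ?thesis
      by (rule has_field_derivative_transform_within_open [where S = "{-pi<..<pi}"])
        (use 1 in \<open>auto simp: bump_term_def\<close>)
  next
    case 2
    then show ?thesis using DERIV_bump_term_endpoint [OF 2] by (simp add: bump_term_def)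
  next
    case 3
    have "(bump_term a k p has_real_derivative 0) (at x)"
      by (rule has_field_derivative_transform_within_open [OF DERIV_const, where S = "{y. pi < \<bar>y\<bar>}"])
        (use 3 in \<open>auto simp: bump_term_def open_Collect_less continuous_intros\<close>)
    then show ?thesis using 3 by (simp add: bump_term_def)
  qed
qed

lemma DERIV_bump_poly_term:
  "(bump_term (k mod 2) k (bump_poly k) has_real_derivative
      bump_term (Suc k mod 2) (Suc k) (bump_poly (Suc k)) x) (at x)"
proof -
  have "Suc k mod 2 = 1 - k mod 2" by (simp add: mod_Suc)
  then show ?thesis unfolding bump_poly.simps(2) by (simp only:) (rule DERIV_bump_term, simp)
qed

lemma DERIV_z1: "(z1 has_real_derivative bump_term 1 1 (bump_poly 1) x) (at x)"
proof -
  have "z1 = (\<lambda>x. bump_term 0 0 (bump_poly 0) x - 1)"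
    by (simp add: fun_eq_iff z1_def bump_term_def)
  then show ?thesis
    using DERIV_diff [OF DERIV_bump_poly_term [of 0 x] DERIV_const [of 1]] by simp
qed

lemma higher_deriv_z1:
  "(deriv ^^ Suc k) z1 = bump_term (Suc k mod 2) (Suc k) (bump_poly (Suc k))"
proof (induction k)
  case 0
  show ?case using DERIV_z1 by (simp add: fun_eq_iff DERIV_imp_deriv del: bump_poly.simps)
next
  case (Suc k)
  have "(deriv ^^ Suc (Suc k)) z1 = deriv ((deriv ^^ Suc k) z1)"
    by simp
  also have "\<dots> = deriv (bump_term (Suc k mod 2) (Suc k) (bump_poly (Suc k)))"
    by (simp only: Suc.IH)
  also have "\<dots> = bump_term (Suc (Suc k) mod 2) (Suc (Suc k)) (bump_poly (Suc (Suc k)))"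
    by (intro ext DERIV_imp_deriv DERIV_bump_poly_term)
  finally show ?case .
qed

lemma DERIV_higher_deriv_z1:
  "((deriv ^^ k) z1 has_real_derivative (deriv ^^ Suc k) z1 x) (at x)"
proof (cases k)
  case 0
  then show ?thesis using DERIV_z1 higher_deriv_z1 [of 0] by simp
next
  case (Suc j)
  show ?thesis unfolding Suc higher_deriv_z1 by (rule DERIV_bump_poly_term)
qed

lemma bump_poly_numeral:
  "bump_poly (numeral n) = bump_next (pred_numeral n mod 2) (pred_numeral n) (bump_poly (pred_numeral n))"
  by (simp add: numeral_eq_Suc)

lemma bump_poly_values:
  "bump_poly 1 = [:-4:]"
  "bump_poly 2 = [:8, -24, 12:]"
  "bump_poly 3 = [:-16, 112, -168, 48:]"
  "bump_poly 4 = [:32, -448, 1856, -2784, 1560, -240:]"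
  "bump_poly 5 = [:-64, 1408, -9984, 27840, -30960, 12960, -1440:]"
  "bump_poly 6 = [:128, -4224, 49344, -259328, 657120, -821280, 498960, -131040, 10080:]"
  by (simp_all add: bump_poly_numeral bump_next_def bump_step_def pderiv_pCons)

lemma bump_poly_sign:
  assumes "1 \<le> j" "j \<le> 6" "0 < r" "r \<le> 1 / 192"
  shows "0 < (-1) ^ j * poly (bump_poly j) r"
proof -
  have "j \<in> {1, 2, 3, 4, 5, 6}" using assms(1,2) by auto
  then have "0 < poly (smult ((-1) ^ j) (bump_poly j)) r"
    using assms(3,4)
    by (auto simp: bump_poly_values map_poly_pCons simp del: poly_pCons poly_smult
        intro!: poly_pCons_pos_near_zero [of r "1 / 192"])
      (simp_all add: bump_next_def bump_step_def)
  then show ?thesis by simp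
qed

lemma rho_le_near_endpoint:
  assumes "\<bar>x\<bar> < pi" "\<bar>c\<bar> = pi" "\<bar>x - c\<bar> \<le> eps"
  shows "rho x \<le> 1 / 192"
proof -
  have "rho x \<le> 2 * \<bar>x - c\<bar> / pi" using rho_le_endpoint_dist assms(1,2) by simp
  also have "\<dots> \<le> 2 * eps / 3"
    using assms(3) pi_gt3 by (intro frac_le) auto
  finally show ?thesis by (simp add: eps_def)
qed

lemma bump_term_sign:
  assumes "\<bar>x\<bar> < pi \<Longrightarrow> 0 \<le> c * ((x / pi) ^ a * poly p (rho x))"
  shows "0 \<le> c * bump_term a k p x"
proof (cases "\<bar>x\<bar> < pi")
  case True
  have "c * bump_term a k p x
      = exp (1 - 1 / rho x) * (c * ((x / pi) ^ a * poly p (rho x))) / (rho x ^ (2 * k) * pi ^ k)"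
    using True by (simp add: bump_term_def mult_ac)
  then show ?thesis using assms True rho_pos [OF True] by simp
qed (simp add: bump_term_def)

lemma higher_deriv_z1_nonneg_near_minus_pi:
  assumes "1 \<le> j" "j \<le> 6" "x \<in> {-pi .. -pi + eps}"
  shows "0 \<le> (deriv ^^ j) z1 x"
proof -
  obtain k where j: "j = Suc k" using assms(1) by (cases j) auto
  have "0 \<le> 1 * bump_term (j mod 2) j (bump_poly j) x"
  proof (rule bump_term_sign)
    assume x: "\<bar>x\<bar> < pi"
    have "x \<le> 0" using assms(3) pi_gt3 by (simp add: eps_def)
    then have "(x / pi) ^ (j mod 2) = \<bar>x / pi\<bar> ^ (j mod 2) * (-1) ^ j"
      by (cases "even j") (auto simp: abs_of_nonpos divide_nonpos_pos)
    moreover have "0 < (-1) ^ j * poly (bump_poly j) (rho x)"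
      using assms rho_pos [OF x] rho_le_near_endpoint [OF x, of "-pi"] by (intro bump_poly_sign) auto
    ultimately show "0 \<le> 1 * ((x / pi) ^ (j mod 2) * poly (bump_poly j) (rho x))"
      by (simp add: mult.assoc)
  qed
  then show ?thesis using higher_deriv_z1 [of k] j by simp
qed

lemma higher_deriv_z1_sign_near_pi:
  assumes "1 \<le> j" "j \<le> 6" "x \<in> {pi - eps .. pi}"
  shows "0 \<le> (-1) ^ j * (deriv ^^ j) z1 x"
proof -
  obtain k where j: "j = Suc k" using assms(1) by (cases j) auto
  have "0 \<le> (-1) ^ j * bump_term (j mod 2) j (bump_poly j) x"
  proof (rule bump_term_sign)
    assume x: "\<bar>x\<bar> < pi"
    have "0 \<le> x" using assms(3) pi_gt3 by (simp add: eps_def)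
    then have "0 \<le> (x / pi) ^ (j mod 2)" by simp
    moreover have "0 < (-1) ^ j * poly (bump_poly j) (rho x)"
      using assms rho_pos [OF x] rho_le_near_endpoint [OF x, of pi] by (intro bump_poly_sign) auto
    ultimately have "0 \<le> (x / pi) ^ (j mod 2) * ((-1) ^ j * poly (bump_poly j) (rho x))"
      by (simp add: mult_nonneg_nonneg)
    then show "0 \<le> (-1) ^ j * ((x / pi) ^ (j mod 2) * poly (bump_poly j) (rho x))"
      by (metis mult.left_commute)
  qed
  then show ?thesis using higher_deriv_z1 [of k] j by simp
qed

lemma between_if_DERIV_sign:
  fixes f f' :: "real \<Rightarrow> real"
  assumes f: "\<And>x. (f has_real_derivative f' x) (at x)" and "c \<noteq> 0"
    and sign: "\<And>x. x \<in> {a..b} \<Longrightarrow> 0 \<le> c * f' x"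
  shows "\<forall>x\<in>{a..b}. between (f a) (f b) (f x)"
proof (cases "0 < c")
  case True
  have "f s \<le> f t" if "a \<le> s" "s \<le> t" "t \<le> b" for s t
  proof (rule DERIV_nonneg_imp_nondecreasing [OF \<open>s \<le> t\<close>])
    fix u assume "s \<le> u" "u \<le> t"
    then have "0 \<le> f' u" using that sign [of u] True by (simp add: zero_le_mult_iff)
    then show "\<exists>y. DERIV f u :> y \<and> 0 \<le> y" using f by blast
  qed
  then show ?thesis by (auto simp: between_def)
next
  case False
  have "f t \<le> f s" if "a \<le> s" "s \<le> t" "t \<le> b" for s t
  proof (rule DERIV_nonpos_imp_nonincreasing [OF \<open>s \<le> t\<close>])
    fix u assume "s \<le> u" "u \<le> t"
    then have "f' u \<le> 0" using that sign [of u] False \<open>c \<noteq> 0\<close> by (simp add: zero_le_mult_iff)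
    then show "\<exists>y. DERIV f u :> y \<and> y \<le> 0" using f by blast
  qed
  then show ?thesis by (auto simp: between_def)
qed

theorem corollary2:
  fixes k :: nat
  assumes "k \<le> 5"
  shows "(\<forall>x \<in> {-pi .. -pi + eps}.
            between ((deriv ^^ k) z1 (-pi)) ((deriv ^^ k) z1 (-pi + eps)) ((deriv ^^ k) z1 x))
       \<and> (\<forall>x \<in> {pi - eps .. pi}.
            between ((deriv ^^ k) z1 (pi - eps)) ((deriv ^^ k) z1 pi) ((deriv ^^ k) z1 x))"
proof
  have j: "1 \<le> Suc k" "Suc k \<le> 6" using assms by auto
  show "\<forall>x \<in> {-pi .. -pi + eps}.
      between ((deriv ^^ k) z1 (-pi)) ((deriv ^^ k) z1 (-pi + eps)) ((deriv ^^ k) z1 x)"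
    by (rule between_if_DERIV_sign [OF DERIV_higher_deriv_z1 one_neq_zero])
      (simp only: mult_1 higher_deriv_z1_nonneg_near_minus_pi [OF j])
  show "\<forall>x \<in> {pi - eps .. pi}.
      between ((deriv ^^ k) z1 (pi - eps)) ((deriv ^^ k) z1 pi) ((deriv ^^ k) z1 x)"
    by (rule between_if_DERIV_sign [OF DERIV_higher_deriv_z1, of "(-1) ^ Suc k"])
      (simp, simp only: higher_deriv_z1_sign_near_pi [OF j])
qed

end
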